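(* Let $f:[0,1]\to(0,1)$ be a $C^3$ function whose fixed points are isolated, and assume $1/2$ is a stable fixed point of $f$ with $f'(1/2)=0$. Let $(\alpha_n,l_n)_{n\ge0}$ be an urn process associated to $f$. If $f''(1/2)>0$ (respectively $f''(1/2)<0$), then almost surely on the event $\{\alpha_n\to 1/2\}$ one has $\delta_n\to+\infty$ (respectively $\delta_n\to-\infty$).
   Context: A fixed point $p$ of $f$ is stable if $f'(p)\le1$. Urn process associated to $f$: a Markov chain $((\alpha_n,l_n),n\ge 0)$ on $[0,1]\times(0,+\infty)$ with $l_{n+1}=l_n+1$, and $\alpha_{n+1}=(l_n\alpha_n+1)/(l_n+1)$ with probability $f(\alpha_n)$, $\alpha_{n+1}=l_n\alpha_n/(l_n+1)$ with probability $1-f(\alpha_n)$. $\delta_n:=\sum_{k=0}^n(2f(\alpha_k)-1)$. *)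

theory Defs
  imports "HOL-Probability.Probability"
begin

definition urn_up :: "real \<Rightarrow> real \<Rightarrow> real" where
  "urn_up l a = (l * a + 1) / (l + 1)"

definition urn_down :: "real \<Rightarrow> real \<Rightarrow> real" where
  "urn_down l a = (l * a) / (l + 1)"

definition urn_process ::
  "'w measure \<Rightarrow> (nat \<Rightarrow> 'w measure) \<Rightarrow> (real \<Rightarrow> real) \<Rightarrow>
   (nat \<Rightarrow> 'w \<Rightarrow> real) \<Rightarrow> (nat \<Rightarrow> 'w \<Rightarrow> real) \<Rightarrow> bool" where
  "urn_process M F f alpha l \<longleftrightarrow>
     prob_space M \<and>
     (\<forall>n. sigma_finite_subalgebra M (F n)) \<and>
     (\<forall>n. sets (F n) \<subseteq> sets (F (Suc n))) \<and>
     (\<forall>n. alpha n \<in> borel_measurable (F n)) \<and>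
     (\<forall>n. l n \<in> borel_measurable (F n)) \<and>
     (\<forall>x\<in>space M. alpha 0 x \<in> {0..1} \<and> l 0 x > 0) \<and>
     (\<forall>n. \<forall>x\<in>space M. l (Suc n) x = l n x + 1) \<and>
     (\<forall>n. \<forall>x\<in>space M. alpha (Suc n) x = urn_up (l n x) (alpha n x)
                       \<or> alpha (Suc n) x = urn_down (l n x) (alpha n x)) \<and>
     (\<forall>n. AE x in M.
        real_cond_exp M (F n)
          (indicator {w \<in> space M. alpha (Suc n) w = urn_up (l n w) (alpha n w)}) x
        = f (alpha n x))"

definition urn_delta :: "(real \<Rightarrow> real) \<Rightarrow> (nat \<Rightarrow> 'w \<Rightarrow> real) \<Rightarrow> nat \<Rightarrow> 'w \<Rightarrow> real" where
  "urn_delta f alpha n w = (\<Sum>k\<le>n. 2 * f (alpha k w) - 1)"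

end

theory Submission
  imports Defs "HOL-Analysis.Harmonic_Numbers"
begin

text \<open>Since \<open>f(1/2) = 1/2\<close> and \<open>f'(1/2) = 0\<close>, Taylor's formula gives
  \<open>2 f(a) - 1 = f''(1/2) (a - 1/2)^2 + o((a - 1/2)^2)\<close>. Hence on \<open>{\<alpha>\<^sub>n \<longrightarrow> 1/2}\<close> the
  increments of \<open>\<delta>\<^sub>n\<close> eventually have the sign of \<open>f''(1/2)\<close> and are comparable to
  \<open>(\<alpha>\<^sub>n - 1/2)^2\<close>, and it suffices that \<open>\<Sum> (\<alpha>\<^sub>n - 1/2)^2 = \<infinity>\<close> almost surely.

  For this, the potential \<open>l\<^sub>n (\<alpha>\<^sub>n - 1/2)^2\<close> gains at least
  \<open>1/(4 l\<^sub>n\<^sub>+\<^sub>1) - C (\<alpha>\<^sub>n - 1/2)^2\<close> per step, up to a martingale increment.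
  On the event that \<open>\<Sum> (\<alpha>\<^sub>n - 1/2)^2 \<le> K\<close> and \<open>l\<^sub>0 \<le> L\<close>, dividing by \<open>l\<^sub>n \<le> L + 1 + n\<close>
  and summing with the weights \<open>1/(L + 1 + n)\<close> bounds a sum of order
  \<open>\<Sum> log n / n\<close> by \<open>K\<close> plus the weighted martingale. The martingale, stopped once the
  squared deviations exceed \<open>K\<close>, has second moment at most \<open>4K\<close>, so taking expectations
  the probability of the event times \<open>\<Sum> log n / n\<close> is at most a constant times
  \<open>\<Sum> 1/n\<close>; the probability must vanish.\<close>

lemma filterlim_sum_at_top_eventually_ge:
  fixes a b :: "nat \<Rightarrow> real"
  assumes ge: "eventually (\<lambda>k. b k \<le> a k) sequentially"
    and b: "filterlim (\<lambda>n. \<Sum>k<n. b k) at_top sequentially"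
  shows "filterlim (\<lambda>n. \<Sum>k<n. a k) at_top sequentially"
proof -
  obtain N where N: "\<And>k. k \<ge> N \<Longrightarrow> b k \<le> a k"
    using ge by (auto simp: eventually_sequentially)
  define c where "c = (\<Sum>k<N. a k) - (\<Sum>k<N. b k)"
  have "(\<Sum>k<n. b k) + c \<le> (\<Sum>k<n. a k)" if "n \<ge> N" for n
  proof -
    have split: "(\<Sum>k<n. g k) = (\<Sum>k<N. g k) + (\<Sum>k\<in>{N..<n}. g k)" for g :: "nat \<Rightarrow> real"
      using that by (simp add: lessThan_atLeast0 sum.atLeastLessThan_concat)
    have "(\<Sum>k\<in>{N..<n}. b k) \<le> (\<Sum>k\<in>{N..<n}. a k)"
      by (rule sum_mono) (simp add: N)
    then show ?thesis
      unfolding split[of a] split[of b] c_def by simp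
  qed
  moreover have "filterlim (\<lambda>n. (\<Sum>k<n. b k) + c) at_top sequentially"
    using filterlim_tendsto_add_at_top[OF tendsto_const b, of c] by (simp add: add.commute)
  ultimately show ?thesis
    by (elim filterlim_at_top_mono) (auto simp: eventually_sequentially)
qed

lemma filterlim_sum_inverse_shift_at_top:
  fixes a :: real
  assumes "a > 0"
  shows "filterlim (\<lambda>n. \<Sum>k<n. 1 / (a + real k)) at_top sequentially"
proof (rule filterlim_sum_at_top_eventually_ge)
  define A where "A = max a 1"
  have "filterlim (\<lambda>n. 1 / A * harm n) at_top sequentially"
    by (rule filterlim_tendsto_pos_mult_at_top[OF tendsto_const _ harm_at_top]) (simp add: A_def)
  then show "filterlim (\<lambda>n. \<Sum>k<n. 1 / (A * (real k + 1))) at_top sequentially"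
    by (simp add: harm_altdef sum_distrib_left field_simps)
  have "a + real k \<le> A * (real k + 1)" for k
    using mult_left_mono[of 1 A "real k"] by (simp add: A_def algebra_simps)
  then show "\<forall>\<^sub>F k in sequentially. 1 / (A * (real k + 1)) \<le> 1 / (a + real k)"
    using assms by (intro always_eventually allI divide_left_mono) (auto simp: A_def)
qed

lemma filterlim_weighted_sum_at_top:
  fixes w g :: "nat \<Rightarrow> real"
  assumes "\<And>k. w k \<ge> 0" and "filterlim (\<lambda>n. \<Sum>k<n. w k) at_top sequentially"
    and "filterlim g at_top sequentially"
  shows "filterlim (\<lambda>n. \<Sum>k<n. w k * g k) at_top sequentially"
proof (rule filterlim_sum_at_top_eventually_ge[OF _ assms(2)])
  have "eventually (\<lambda>k. 1 \<le> g k) sequentially"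
    using assms(3) by (simp add: filterlim_at_top)
  then show "eventually (\<lambda>k. w k \<le> w k * g k) sequentially"
    by eventually_elim (use assms(1) mult_left_mono in fastforce)
qed

lemma filterlim_incseq_at_top:
  fixes s :: "nat \<Rightarrow> real"
  assumes "incseq s" and "\<And>K. \<exists>n. K \<le> s n"
  shows "filterlim s at_top sequentially"
  unfolding filterlim_at_top eventually_sequentially
  using assms by (meson incseqD order_trans)

lemma bounded_slope_at:
  fixes f :: "real \<Rightarrow> real"
  assumes deriv: "(f has_real_derivative D) (at p within S)"
    and bounded: "\<And>x. x \<in> S \<Longrightarrow> \<bar>f x - f p\<bar> \<le> R"
  obtains B where "\<And>x. x \<in> S \<Longrightarrow> \<bar>f x - f p\<bar> \<le> B * \<bar>x - p\<bar>"
proof -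
  have "((\<lambda>y. (f y - f p) / (y - p)) \<longlongrightarrow> D) (at p within S)"
    using deriv by (simp add: has_field_derivative_iff)
  then have "eventually (\<lambda>y. dist ((f y - f p) / (y - p)) D < 1) (at p within S)"
    by (rule tendstoD) simp
  then obtain d where d: "d > 0"
    and near: "\<And>y. y \<in> S \<Longrightarrow> y \<noteq> p \<Longrightarrow> dist y p < d \<Longrightarrow> \<bar>(f y - f p) / (y - p) - D\<bar> < 1"
    by (auto simp: eventually_at dist_real_def)
  have "\<bar>f x - f p\<bar> \<le> max (\<bar>D\<bar> + 1) (R / d) * \<bar>x - p\<bar>" if x: "x \<in> S" for x
  proof (cases "\<bar>x - p\<bar> < d")
    case True
    show ?thesis
    proof (cases "x = p")
      case False
      then have "\<bar>(f x - f p) / (x - p)\<bar> \<le> \<bar>D\<bar> + 1"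
        using near[OF x False] True by (simp add: dist_real_def del: abs_divide)
      then have "\<bar>f x - f p\<bar> \<le> (\<bar>D\<bar> + 1) * \<bar>x - p\<bar>"
        using False by (simp add: divide_le_eq)
      then show ?thesis
        by (rule order_trans) (simp add: mult_right_mono)
    qed simp
  next
    case False
    then have "R \<le> R / d * \<bar>x - p\<bar>"
      using d bounded[OF x] by (simp add: field_simps mult_left_mono)
    also have "\<dots> \<le> max (\<bar>D\<bar> + 1) (R / d) * \<bar>x - p\<bar>"
      by (intro mult_right_mono) auto
    finally show ?thesis
      using bounded[OF x] by linarith
  qed
  then show thesis by (rule that)
qed

lemma has_real_derivative_interior_Icc:
  assumes "\<forall>x\<in>{a..b}. (g has_real_derivative g' x) (at x within {a..b})" and "x \<in> {a<..<b}"
  shows "(g has_real_derivative g' x) (at x)"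
proof -
  have "(g has_real_derivative g' x) (at x within {a..b})"
    using assms by auto
  then show ?thesis
    using assms(2) at_within_Icc_at[of a x b] by simp
qed

lemma taylor_second_order_little_o:
  fixes f f1 f2 :: "real \<Rightarrow> real"
  assumes d1: "\<And>x. x \<in> {a<..<b} \<Longrightarrow> (f has_real_derivative f1 x) (at x)"
    and d2: "\<And>x. x \<in> {a<..<b} \<Longrightarrow> (f1 has_real_derivative f2 x) (at x)"
    and p: "p \<in> {a<..<b}" and cont: "isCont f2 p" and e: "e > 0"
  obtains \<eta> where "\<eta> > 0"
    "\<And>x. \<bar>x - p\<bar> < \<eta> \<Longrightarrow>
       \<bar>f x - f p - f1 p * (x - p) - f2 p / 2 * (x - p)^2\<bar> \<le> e * (x - p)^2"
proof -
  obtain s where s: "s > 0" and close: "\<And>y. \<bar>y - p\<bar> < s \<Longrightarrow> \<bar>f2 y - f2 p\<bar> < 2 * e"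
    using cont e unfolding isCont_def LIM_def by (force simp: dist_real_def)
  define \<eta> where "\<eta> = min s (min (p - a) (b - p))"
  have "\<eta> > 0" using s p by (simp add: \<eta>_def)
  moreover have "\<bar>f x - f p - f1 p * (x - p) - f2 p / 2 * (x - p)^2\<bar> \<le> e * (x - p)^2"
    if x: "\<bar>x - p\<bar> < \<eta>" for x
  proof (cases "x = p")
    case False
    define diff where "diff m = (if m = 0 then f else if m = 1 then f1 else f2)" for m :: nat
    have "\<forall>m t. m < 2 \<and> min x p \<le> t \<and> t \<le> max x p \<longrightarrow> DERIV (diff m) t :> diff (Suc m) t"
    proof (intro allI impI)
      fix m t assume "m < (2::nat) \<and> min x p \<le> t \<and> t \<le> max x p"
      moreover from this have "t \<in> {a<..<b}" using x by (auto simp: \<eta>_def)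
      ultimately show "DERIV (diff m) t :> diff (Suc m) t"
        using d1 d2 by (cases m) (auto simp: diff_def)
    qed
    then have "\<exists>t. (if x < p then x < t \<and> t < p else p < t \<and> t < x) \<and>
        f x = (\<Sum>m<2. diff m p / fact m * (x - p) ^ m) + diff 2 t / fact 2 * (x - p)^2"
      using False by (intro Taylor) (auto simp: diff_def)
    then obtain t where between: "if x < p then x < t \<and> t < p else p < t \<and> t < x"
      and "f x = (\<Sum>m<2. diff m p / fact m * (x - p) ^ m) + diff 2 t / fact 2 * (x - p)^2"
      by blast
    then have expand: "f x = f p + f1 p * (x - p) + f2 t / 2 * (x - p)^2"
      by (simp add: diff_def numeral_2_eq_2)
    have "\<bar>f2 t - f2 p\<bar> \<le> 2 * e"
      using close[of t] between x by (auto simp: \<eta>_def split: if_splits)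
    then have "\<bar>f2 t - f2 p\<bar> / 2 * (x - p)^2 \<le> e * (x - p)^2"
      by (intro mult_right_mono) auto
    then have "\<bar>(f2 t - f2 p) / 2 * (x - p)^2\<bar> \<le> e * (x - p)^2"
      by (simp add: abs_mult)
    then show ?thesis
      by (simp add: expand algebra_simps)
  qed simp
  ultimately show thesis by (rule that)
qed

lemma quadratic_growth_at_critical_point:
  fixes f f1 f2 :: "real \<Rightarrow> real"
  assumes d1: "\<And>x. x \<in> {a<..<b} \<Longrightarrow> (f has_real_derivative f1 x) (at x)"
    and d2: "\<And>x. x \<in> {a<..<b} \<Longrightarrow> (f1 has_real_derivative f2 x) (at x)"
    and p: "p \<in> {a<..<b}" and cont: "isCont f2 p" and critical: "f1 p = 0" and "f2 p \<noteq> 0"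
  shows "\<exists>\<eta>>0. \<forall>x. \<bar>x - p\<bar> < \<eta> \<longrightarrow> \<bar>f2 p\<bar> / 4 * (x - p)^2 \<le> sgn (f2 p) * (f x - f p)"
proof -
  have "\<bar>f2 p\<bar> / 4 > 0"
    using \<open>f2 p \<noteq> 0\<close> by simp
  then obtain \<eta> where "\<eta> > 0" and \<eta>: "\<And>x. \<bar>x - p\<bar> < \<eta> \<Longrightarrow>
      \<bar>f x - f p - f1 p * (x - p) - f2 p / 2 * (x - p)^2\<bar> \<le> \<bar>f2 p\<bar> / 4 * (x - p)^2"
    using taylor_second_order_little_o[OF d1 d2 p cont] by blast
  have "\<bar>f2 p\<bar> / 4 * (x - p)^2 \<le> sgn (f2 p) * (f x - f p)" if "\<bar>x - p\<bar> < \<eta>" for x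
    using \<eta>[OF that] \<open>f2 p \<noteq> 0\<close> unfolding critical abs_le_iff
    by (cases "f2 p > 0") (auto simp: sgn_if)
  with \<open>\<eta> > 0\<close> show ?thesis by blast
qed

lemma sum_at_top_of_quadratic_lower_bound:
  fixes g :: "real \<Rightarrow> real" and x :: "nat \<Rightarrow> real"
  assumes lim: "x \<longlonglongrightarrow> p"
    and diverge: "filterlim (\<lambda>n. \<Sum>k<n. (x k - p)^2) at_top sequentially"
    and c: "c > 0" and \<eta>: "\<eta> > 0" and lower: "\<And>y. \<bar>y - p\<bar> < \<eta> \<Longrightarrow> c * (y - p)^2 \<le> g y"
  shows "filterlim (\<lambda>n. \<Sum>k<n. g (x k)) at_top sequentially"
proof (rule filterlim_sum_at_top_eventually_ge)
  have "filterlim (\<lambda>n. c * (\<Sum>k<n. (x k - p)^2)) at_top sequentially"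
    by (rule filterlim_tendsto_pos_mult_at_top[OF tendsto_const c diverge])
  then show "filterlim (\<lambda>n. \<Sum>k<n. c * (x k - p)^2) at_top sequentially"
    by (simp add: sum_distrib_left)
  have "eventually (\<lambda>k. \<bar>x k - p\<bar> < \<eta>) sequentially"
    using lim \<eta> by (simp add: tendsto_iff dist_real_def)
  then show "eventually (\<lambda>k. c * (x k - p)^2 \<le> g (x k)) sequentially"
    by eventually_elim (rule lower)
qed

text \<open>One step of the potential \<open>l (\<alpha> - 1/2)^2\<close>: the urn moves from \<open>(\<alpha>, l)\<close> to
  \<open>((l \<alpha> + \<xi>)/(l + 1), l + 1)\<close>, and when \<open>\<phi>\<close> is the conditional probability of \<open>\<xi> = 1\<close>
  the subtracted term is the martingale part of the increment.\<close>

lemma urn_potential_increment: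
  fixes l a xi phi :: real
  assumes "l > 0" and "xi \<in> {0, 1}"
  shows "(l + 1) * ((l * a + xi) / (l + 1) - 1/2)^2 - l * (a - 1/2)^2
           - 2 * l * (a - 1/2) / (l + 1) * (xi - phi)
         = (2 * l * ((a - 1/2) * (phi - 1/2)) + 1/4 - l * (a - 1/2)^2) / (l + 1)"
proof -
  define t x where "t = l + 1" and "x = a - 1/2"
  have "t \<noteq> 0" and l: "l = t - 1" and a: "a = x + 1/2"
    using assms(1) by (simp_all add: t_def x_def)
  then show ?thesis
    unfolding t_def[symmetric] x_def[symmetric] using assms(2)
    by (auto simp: l a field_simps power2_eq_square)
qed

lemma urn_potential_increment_ge:
  fixes l a xi phi B :: real
  assumes l: "l > 0" and xi: "xi \<in> {0, 1}" and phi: "\<bar>phi - 1/2\<bar> \<le> B * \<bar>a - 1/2\<bar>"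
  shows "(l + 1) * ((l * a + xi) / (l + 1) - 1/2)^2 - l * (a - 1/2)^2
           - 2 * l * (a - 1/2) / (l + 1) * (xi - phi)
         \<ge> 1 / (4 * (l + 1)) - (2 * B + 1) * (a - 1/2)^2" (is "?lhs \<ge> _")
proof -
  define x q where "x = a - 1/2" and "q = l / (l + 1)"
  have q: "0 \<le> q" "q \<le> 1" using l by (auto simp: q_def)
  have prod: "\<bar>x * (phi - 1/2)\<bar> \<le> B * x^2"
    using mult_left_mono[OF phi, of "\<bar>x\<bar>"]
    by (simp add: x_def abs_mult power2_eq_square mult.left_commute)
  have "q * - (B * x^2) \<le> q * (x * (phi - 1/2))"
    using prod by (intro mult_left_mono q) (simp add: abs_le_iff)
  moreover have "q * (B * x^2) \<le> B * x^2"
    using prod q by (intro mult_left_le_one_le) auto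
  ultimately have "q * (x * (phi - 1/2)) \<ge> - (B * x^2)" by simp
  moreover have "q * x^2 \<le> x^2" using q by (simp add: mult_left_le_one_le)
  moreover have "?lhs = 2 * q * (x * (phi - 1/2)) + 1 / (4 * (l + 1)) - q * x^2"
    unfolding urn_potential_increment[OF l xi]
    by (simp add: x_def q_def add_divide_distrib diff_divide_distrib)
  ultimately show ?thesis
    by (simp add: x_def algebra_simps)
qed

lemma borel_measurable_urn_up [measurable]:
  assumes [measurable]: "a \<in> borel_measurable N" "b \<in> borel_measurable N"
  shows "(\<lambda>w. urn_up (a w) (b w)) \<in> borel_measurable N"
  unfolding urn_up_def by measurable

locale urn_model =
  fixes M :: "'w measure" and F :: "nat \<Rightarrow> 'w measure" and f :: "real \<Rightarrow> real"
    and alpha l :: "nat \<Rightarrow> 'w \<Rightarrow> real"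
  assumes process: "urn_process M F f alpha l"
    and f_range: "\<forall>x\<in>{0..1}. f x \<in> {0..1}"
    and f_cont: "continuous_on {0..1} f"
begin

sublocale prob_space M
  using process by (simp add: urn_process_def)

lemma integrable_bounded:
  fixes g :: "'w \<Rightarrow> real"
  assumes "g \<in> borel_measurable M" and "\<And>w. w \<in> space M \<Longrightarrow> \<bar>g w\<bar> \<le> C"
  shows "integrable M g"
  using assms by (intro integrable_const_bound[where B=C] AE_I2) auto

lemma
  shows sigma_finite_subalgebra_F: "sigma_finite_subalgebra M (F n)"
    and sets_F_Suc: "sets (F n) \<subseteq> sets (F (Suc n))"
    and alpha_adapted: "alpha n \<in> borel_measurable (F n)"
    and l_adapted: "l n \<in> borel_measurable (F n)"
    and alpha_0_range: "w \<in> space M \<Longrightarrow> alpha 0 w \<in> {0..1}"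
    and l_0_pos: "w \<in> space M \<Longrightarrow> l 0 w > 0"
    and l_Suc: "w \<in> space M \<Longrightarrow> l (Suc n) w = l n w + 1"
    and alpha_Suc_cases: "w \<in> space M \<Longrightarrow>
      alpha (Suc n) w = urn_up (l n w) (alpha n w) \<or> alpha (Suc n) w = urn_down (l n w) (alpha n w)"
    and cond_exp_up: "AE w in M. real_cond_exp M (F n)
      (indicator {w \<in> space M. alpha (Suc n) w = urn_up (l n w) (alpha n w)}) w = f (alpha n w)"
  using process unfolding urn_process_def by blast+

lemma space_F: "space (F n) = space M"
  using sigma_finite_subalgebra.subalg[OF sigma_finite_subalgebra_F] by (simp add: subalgebra_def)

lemma measurable_F_mono:
  assumes "j \<le> n" and "g \<in> borel_measurable (F j)"
  shows "g \<in> borel_measurable (F n)"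
proof -
  have "sets (F j) \<subseteq> sets (F n)"
    using sets_F_Suc \<open>j \<le> n\<close> by (rule lift_Suc_mono_le)
  then have "subalgebra (F n) (F j)"
    by (simp add: subalgebra_def space_F)
  then show ?thesis
    using assms(2) measurable_from_subalg by blast
qed

lemma measurable_F_M: "g \<in> borel_measurable (F n) \<Longrightarrow> g \<in> borel_measurable M"
  using sigma_finite_subalgebra.subalg[OF sigma_finite_subalgebra_F] measurable_from_subalg by blast

lemma alpha_F: "j \<le> n \<Longrightarrow> alpha j \<in> borel_measurable (F n)"
  by (rule measurable_F_mono[OF _ alpha_adapted])

lemma l_F: "j \<le> n \<Longrightarrow> l j \<in> borel_measurable (F n)"
  by (rule measurable_F_mono[OF _ l_adapted])

lemma alpha_M [measurable]: "alpha j \<in> borel_measurable M"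
  using alpha_adapted by (rule measurable_F_M)

lemma l_M [measurable]: "l j \<in> borel_measurable M"
  using l_adapted by (rule measurable_F_M)

lemma l_eq: "w \<in> space M \<Longrightarrow> l n w = l 0 w + real n"
  by (induction n) (simp_all add: l_Suc)

lemma l_pos: "w \<in> space M \<Longrightarrow> l n w > 0"
  using l_0_pos[of w] l_eq[of w n] of_nat_0_le_iff[of n] by linarith

definition xi :: "nat \<Rightarrow> 'w \<Rightarrow> real" where
  "xi n = indicator {w \<in> space M. alpha (Suc n) w = urn_up (l n w) (alpha n w)}"

lemma xi_01: "xi n w \<in> {0, 1}"
  by (simp add: xi_def indicator_def)

lemma alpha_Suc:
  assumes w: "w \<in> space M"
  shows "alpha (Suc n) w = (l n w * alpha n w + xi n w) / (l n w + 1)"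
proof (cases "alpha (Suc n) w = urn_up (l n w) (alpha n w)")
  case True
  then show ?thesis using w by (simp add: xi_def urn_up_def)
next
  case False
  then show ?thesis
    using alpha_Suc_cases[OF w, of n] w by (simp add: xi_def urn_down_def)
qed

lemma alpha_range: "w \<in> space M \<Longrightarrow> alpha n w \<in> {0..1}"
proof (induction n)
  case 0
  then show ?case by (rule alpha_0_range)
next
  case (Suc n)
  then have "0 \<le> alpha n w" "alpha n w \<le> 1" and l: "l n w > 0"
    using l_pos by auto
  moreover have "alpha n w * l n w \<le> l n w" "0 \<le> alpha n w * l n w"
    using mult_right_mono[of "alpha n w" 1 "l n w"] l \<open>0 \<le> alpha n w\<close> \<open>alpha n w \<le> 1\<close> by simp_all
  moreover have "0 \<le> xi n w" "xi n w \<le> 1"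
    using xi_01[of n w] by auto
  ultimately have "0 \<le> alpha n w * l n w + xi n w" "alpha n w * l n w + xi n w \<le> l n w + 1"
    by linarith+
  then show ?case
    using l by (simp add: alpha_Suc[OF Suc.prems] mult.commute)
qed

lemma xi_F: "j < n \<Longrightarrow> xi j \<in> borel_measurable (F n)"
proof -
  assume "j < n"
  then have [measurable]: "alpha (Suc j) \<in> borel_measurable (F n)" "alpha j \<in> borel_measurable (F n)"
    "l j \<in> borel_measurable (F n)" by (auto intro: alpha_F l_F)
  have "{w \<in> space (F n). alpha (Suc j) w = urn_up (l j w) (alpha j w)} \<in> sets (F n)"
    by measurable
  then show ?thesis
    unfolding xi_def space_F by (rule borel_measurable_indicator)
qed

lemma xi_M [measurable]: "xi j \<in> borel_measurable M"
  using xi_F[of j "Suc j"] measurable_F_M by blast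

lemma f_alpha_F: "j \<le> n \<Longrightarrow> (\<lambda>w. f (alpha j w)) \<in> borel_measurable (F n)"
proof -
  assume "j \<le> n"
  then have "alpha j \<in> F n \<rightarrow>\<^sub>M restrict_space borel {0..1}"
    using alpha_range by (intro measurable_restrict_space2) (auto simp: space_F alpha_F)
  moreover have "f \<in> borel_measurable (restrict_space borel {0..1})"
    by (rule borel_measurable_continuous_on_restrict[OF f_cont])
  ultimately show ?thesis
    by (rule measurable_comp[unfolded comp_def])
qed

lemma f_alpha_M [measurable]: "(\<lambda>w. f (alpha j w)) \<in> borel_measurable M"
  using f_alpha_F measurable_F_M by blast

lemma f_alpha_range: "w \<in> space M \<Longrightarrow> f (alpha n w) \<in> {0..1}"
  using f_range alpha_range by blast

lemma integral_mult_xi: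
  assumes g: "g \<in> borel_measurable (F n)" and bound: "\<And>w. w \<in> space M \<Longrightarrow> \<bar>g w\<bar> \<le> C"
  shows "(\<integral>w. g w * xi n w \<partial>M) = (\<integral>w. g w * f (alpha n w) \<partial>M)"
proof -
  interpret sigma_finite_subalgebra M "F n" by (rule sigma_finite_subalgebra_F)
  have [measurable]: "g \<in> borel_measurable M" using g measurable_F_M by blast
  have "\<bar>g w * xi n w\<bar> \<le> C" if "w \<in> space M" for w
    using bound[OF that] xi_01[of n w] by (auto simp: abs_mult)
  then have "integrable M (\<lambda>w. g w * xi n w)"
    by (intro integrable_bounded) auto
  then have "(\<integral>w. g w * xi n w \<partial>M) = (\<integral>w. g w * real_cond_exp M (F n) (xi n) w \<partial>M)"
    using real_cond_exp_intg(2)[OF _ g] by simp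
  also have "\<dots> = (\<integral>w. g w * f (alpha n w) \<partial>M)"
    using cond_exp_up[of n] unfolding xi_def
    by (intro integral_cong_AE) auto
  finally show ?thesis .
qed

definition potential :: "nat \<Rightarrow> 'w \<Rightarrow> real" where
  "potential n w = l n w * (alpha n w - 1/2)^2"

text \<open>\<open>mart K\<close> is the martingale part of \<open>potential\<close>, switched off by \<open>active K\<close> once
  the squared deviations of \<open>alpha\<close> from \<open>1/2\<close> have accumulated more than \<open>K\<close>;
  this keeps its second moment below \<open>4 K\<close>.\<close>

definition active :: "real \<Rightarrow> nat \<Rightarrow> 'w \<Rightarrow> real" where
  "active K k w = (if (\<Sum>j\<le>k. (alpha j w - 1/2)^2) \<le> K then 1 else 0)"

definition coef :: "nat \<Rightarrow> 'w \<Rightarrow> real" where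
  "coef k w = 2 * l k w * (alpha k w - 1/2) / (l k w + 1)"

definition mart :: "real \<Rightarrow> nat \<Rightarrow> 'w \<Rightarrow> real" where
  "mart K n w = (\<Sum>k<n. active K k w * coef k w * (xi k w - f (alpha k w)))"

lemma active_01: "active K k w \<in> {0, 1}"
  by (simp add: active_def)

lemma active_F: "k \<le> n \<Longrightarrow> active K k \<in> borel_measurable (F n)"
proof -
  assume "k \<le> n"
  then have [measurable]: "alpha j \<in> borel_measurable (F n)" if "j \<in> {..k}" for j
    using that by (auto intro: alpha_F)
  show ?thesis
    unfolding active_def[abs_def] by measurable
qed

lemma coef_F: "k \<le> n \<Longrightarrow> coef k \<in> borel_measurable (F n)"
proof -
  assume "k \<le> n"
  then have [measurable]: "alpha k \<in> borel_measurable (F n)" "l k \<in> borel_measurable (F n)"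
    by (auto intro: alpha_F l_F)
  show ?thesis
    unfolding coef_def[abs_def] by measurable
qed

lemma mart_F: "mart K n \<in> borel_measurable (F n)"
proof -
  have [measurable]: "active K k \<in> borel_measurable (F n)" "coef k \<in> borel_measurable (F n)"
    "xi k \<in> borel_measurable (F n)" "(\<lambda>w. f (alpha k w)) \<in> borel_measurable (F n)"
    if "k \<in> {..<n}" for k
    using that by (auto intro: active_F coef_F xi_F f_alpha_F)
  show ?thesis
    unfolding mart_def[abs_def] by measurable
qed

lemma active_M [measurable]: "active K k \<in> borel_measurable M"
  by (rule measurable_F_M[OF active_F[OF order_refl]])

lemma coef_M [measurable]: "coef k \<in> borel_measurable M"
  by (rule measurable_F_M[OF coef_F[OF order_refl]])

lemma mart_M [measurable]: "mart K n \<in> borel_measurable M"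
  using mart_F by (rule measurable_F_M)

lemma coef_bounds:
  assumes w: "w \<in> space M"
  shows "\<bar>coef k w\<bar> \<le> 1" and "(coef k w)^2 \<le> 4 * (alpha k w - 1/2)^2"
proof -
  define q where "q = l k w / (l k w + 1)"
  have q: "0 \<le> q" "q \<le> 1"
    using l_pos[OF w, of k] by (auto simp: q_def)
  have coef_eq: "coef k w = 2 * (alpha k w - 1/2) * q"
    by (simp add: coef_def q_def)
  have "\<bar>2 * (alpha k w - 1/2)\<bar> \<le> 1"
    unfolding abs_le_iff using alpha_range[OF w, of k] by auto
  then show "\<bar>coef k w\<bar> \<le> 1"
    unfolding coef_eq abs_mult using q mult_mono[of _ 1 q 1] by simp
  have "(coef k w)^2 = 4 * (alpha k w - 1/2)^2 * q^2"
    unfolding coef_eq by (simp add: power2_eq_square algebra_simps)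
  also have "\<dots> \<le> 4 * (alpha k w - 1/2)^2 * 1"
    using q by (intro mult_left_mono) (auto simp: power_le_one)
  finally show "(coef k w)^2 \<le> 4 * (alpha k w - 1/2)^2" by simp
qed

lemma mart_step_bounds:
  fixes K :: real and k :: nat
  assumes w: "w \<in> space M"
  defines "d \<equiv> active K k w * coef k w * (xi k w - f (alpha k w))"
  shows "\<bar>d\<bar> \<le> 1" and "d^2 \<le> active K k w * (coef k w)^2"
proof -
  have diff: "\<bar>xi k w - f (alpha k w)\<bar> \<le> 1"
    using xi_01[of k w] f_alpha_range[OF w, of k] by auto
  have active: "0 \<le> active K k w" "active K k w \<le> 1" "(active K k w)^2 = active K k w"
    using active_01[of K k w] by auto
  show "\<bar>d\<bar> \<le> 1"
    unfolding d_def abs_mult using active coef_bounds(1)[OF w, of k] diff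
    by (intro mult_le_one) auto
  have "d^2 = active K k w * (coef k w)^2 * (xi k w - f (alpha k w))^2"
    by (simp add: d_def power_mult_distrib active(3))
  also have "\<dots> \<le> active K k w * (coef k w)^2 * 1"
    using diff active by (intro mult_left_mono) (auto simp: abs_square_le_1)
  finally show "d^2 \<le> active K k w * (coef k w)^2" by simp
qed

lemma active_coef_sq_bounds:
  shows "0 \<le> active K k w * (coef k w)^2"
    and "w \<in> space M \<Longrightarrow> active K k w * (coef k w)^2 \<le> 1"
  using active_01[of K k w] coef_bounds(1)[of w k] by (auto simp: abs_square_le_1)

lemma mart_abs_le:
  assumes "w \<in> space M"
  shows "\<bar>mart K n w\<bar> \<le> real n"
proof -
  have "\<bar>mart K n w\<bar> \<le> (\<Sum>k<n. \<bar>active K k w * coef k w * (xi k w - f (alpha k w))\<bar>)"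
    unfolding mart_def by (rule sum_abs)
  also have "\<dots> \<le> (\<Sum>k<n. 1)"
    by (intro sum_mono mart_step_bounds(1)[OF assms])
  finally show ?thesis by simp
qed

lemma mart_sq_le: "w \<in> space M \<Longrightarrow> (mart K n w)^2 \<le> (real n)^2"
  using mart_abs_le[where w=w and K=K and n=n] by (simp add: abs_le_square_iff[symmetric])

lemma sum_active_sq_dev_le:
  assumes "K \<ge> 0"
  shows "(\<Sum>k<n. active K k w * (alpha k w - 1/2)^2) \<le> min K (\<Sum>k<n. (alpha k w - 1/2)^2)"
proof (induction n)
  case (Suc n)
  show ?case
  proof (cases "(\<Sum>j\<le>n. (alpha j w - 1/2)^2) \<le> K")
    case True
    then show ?thesis
      using Suc.IH by (simp add: active_def lessThan_Suc_atMost[symmetric])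
  next
    case False
    then show ?thesis
      using Suc.IH by (simp add: active_def) (smt (verit) zero_le_power2)
  qed
qed (simp add: assms)

lemma sum_active_coef_sq_le:
  assumes "K \<ge> 0" and w: "w \<in> space M"
  shows "(\<Sum>k<n. active K k w * (coef k w)^2) \<le> 4 * K"
proof -
  have "(\<Sum>k<n. active K k w * (coef k w)^2) \<le> (\<Sum>k<n. 4 * (active K k w * (alpha k w - 1/2)^2))"
  proof (rule sum_mono)
    fix k
    show "active K k w * (coef k w)^2 \<le> 4 * (active K k w * (alpha k w - 1/2)^2)"
      using active_01[of K k w] coef_bounds(2)[OF w, of k] by auto
  qed
  also have "\<dots> \<le> 4 * K"
    using sum_active_sq_dev_le[OF assms(1), where n=n and w=w] by (simp add: sum_distrib_left[symmetric])
  finally show ?thesis .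
qed


lemma integral_mart_sq_le:
  "(\<integral>w. (mart K n w)^2 \<partial>M) \<le> (\<integral>w. (\<Sum>k<n. active K k w * (coef k w)^2) \<partial>M)"
proof (induction n)
  case (Suc n)
  define g where "g w = mart K n w * active K n w * coef n w" for w
  define d where "d w = active K n w * coef n w * (xi n w - f (alpha n w))" for w
  have g_F [measurable]: "g \<in> borel_measurable (F n)"
    using mart_F active_F[OF order_refl] coef_F[OF order_refl] unfolding g_def[abs_def] by measurable
  then have [measurable]: "g \<in> borel_measurable M"
    by (rule measurable_F_M)
  have g_bound: "\<bar>g w\<bar> \<le> real n" if "w \<in> space M" for w
  proof -
    have "\<bar>active K n w * coef n w\<bar> \<le> 1"
      using active_01[of K n w] coef_bounds(1)[OF that, of n] by auto
    then show ?thesis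
      using mart_abs_le[OF that, of K n] mult_mono[of _ "real n" _ 1]
      by (simp add: g_def abs_mult mult.assoc)
  qed
  have "\<bar>g w * xi n w\<bar> \<le> real n" "\<bar>g w * f (alpha n w)\<bar> \<le> real n" if "w \<in> space M" for w
    using g_bound[OF that] xi_01[of n w] f_alpha_range[OF that, of n] mult_mono[of "\<bar>g w\<bar>" "real n" _ 1]
    by (auto simp: abs_mult)
  then have int_xi: "integrable M (\<lambda>w. g w * xi n w)"
    and int_f: "integrable M (\<lambda>w. g w * f (alpha n w))"
    by (auto intro!: integrable_bounded[where C="real n"])
  have int_mart: "integrable M (\<lambda>w. (mart K n w)^2)"
    using mart_sq_le by (intro integrable_bounded[where C="real n ^ 2"]) auto
  have int_d: "integrable M (\<lambda>w. (d w)^2)"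
    using mart_step_bounds(1) by (intro integrable_bounded[where C=1]) (auto simp: d_def abs_square_le_1)
  have "(\<integral>w. (mart K (Suc n) w)^2 \<partial>M)
      = (\<integral>w. (mart K n w)^2 + (2 * (g w * xi n w) - 2 * (g w * f (alpha n w))) + (d w)^2 \<partial>M)"
    by (simp add: mart_def d_def g_def power2_eq_square algebra_simps)
  also have "\<dots> = (\<integral>w. (mart K n w)^2 \<partial>M)
      + (2 * (\<integral>w. g w * xi n w \<partial>M) - 2 * (\<integral>w. g w * f (alpha n w) \<partial>M)) + (\<integral>w. (d w)^2 \<partial>M)"
    using int_xi int_f int_mart int_d by simp
  also have "(\<integral>w. g w * xi n w \<partial>M) = (\<integral>w. g w * f (alpha n w) \<partial>M)"
    using g_F g_bound by (rule integral_mult_xi)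
  also have "(\<integral>w. (d w)^2 \<partial>M) \<le> (\<integral>w. active K n w * (coef n w)^2 \<partial>M)"
    using mart_step_bounds(2) active_coef_sq_bounds
    by (intro integral_mono int_d integrable_bounded[where C=1]) (auto simp: d_def)
  moreover have "integrable M (\<lambda>w. active K k w * (coef k w)^2)" for k
    using active_coef_sq_bounds by (intro integrable_bounded[where C=1]) auto
  ultimately show ?case
    using Suc.IH by (simp add: Bochner_Integration.integral_sum)
qed (simp add: mart_def)

lemma integral_mart_abs_le:
  assumes "K \<ge> 0"
  shows "(\<integral>w. \<bar>mart K n w\<bar> \<partial>M) \<le> (1 + 4 * K) / 2"
proof -
  have int_sq: "integrable M (\<lambda>w. (mart K n w)^2)"
    using mart_sq_le by (intro integrable_bounded[where C="real n ^ 2"]) auto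
  have "\<bar>x\<bar> \<le> (1 + x^2) / 2" for x :: real
    using sum_squares_ge_zero[of "\<bar>x\<bar> - 1" 0] by (simp add: power2_eq_square algebra_simps)
  moreover have "integrable M (\<lambda>w. \<bar>mart K n w\<bar>)"
    using mart_abs_le by (intro integrable_bounded[where C="real n"]) auto
  ultimately have "(\<integral>w. \<bar>mart K n w\<bar> \<partial>M) \<le> (\<integral>w. (1 + (mart K n w)^2) / 2 \<partial>M)"
    using int_sq by (intro integral_mono) auto
  also have "\<dots> = (1 + (\<integral>w. (mart K n w)^2 \<partial>M)) / 2"
    using int_sq by (simp add: prob_space)
  also have "(\<integral>w. (mart K n w)^2 \<partial>M) \<le> 4 * K"
  proof -
    have "0 \<le> (\<Sum>k<n. active K k w * (coef k w)^2)" for w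
      using active_coef_sq_bounds(1) by (rule sum_nonneg)
    then have "(\<integral>w. (\<Sum>k<n. active K k w * (coef k w)^2) \<partial>M) \<le> (\<integral>w. 4 * K \<partial>M)"
      using sum_active_coef_sq_le[OF assms] assms
      by (intro integral_mono integrable_bounded[where C="4 * K"]) auto
    then show ?thesis
      using integral_mart_sq_le[of K n] by (simp add: prob_space)
  qed
  finally show ?thesis by simp
qed

definition bounded_set :: "real \<Rightarrow> nat \<Rightarrow> 'w set" where
  "bounded_set K L = {w \<in> space M. (\<forall>n. (\<Sum>k<n. (alpha k w - 1/2)^2) \<le> K) \<and> l 0 w \<le> real L}"

definition drift :: "nat \<Rightarrow> nat \<Rightarrow> real" where
  "drift L n = (\<Sum>k<n. 1 / (4 * (real L + 1 + real k)))"

lemma bounded_set_sets [measurable]: "bounded_set K L \<in> sets M"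
  unfolding bounded_set_def by measurable

lemma drift_at_top: "filterlim (drift L) at_top sequentially"
proof -
  have "filterlim (\<lambda>n. 1/4 * (\<Sum>k<n. 1 / (real L + 1 + real k))) at_top sequentially"
    by (intro filterlim_tendsto_pos_mult_at_top[OF tendsto_const] filterlim_sum_inverse_shift_at_top) auto
  moreover have "drift L = (\<lambda>n. 1/4 * (\<Sum>k<n. 1 / (real L + 1 + real k)))"
    by (simp add: fun_eq_iff drift_def sum_distrib_left)
  ultimately show ?thesis by simp
qed

context
  fixes B :: real
  assumes slope: "\<forall>a\<in>{0..1}. \<bar>f a - 1/2\<bar> \<le> B * \<bar>a - 1/2\<bar>"
begin

lemma slope_nonneg: "B \<ge> 0"
proof -
  have "\<bar>f 0 - 1/2\<bar> \<le> B / 2"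
    using bspec[OF slope, of 0] by simp
  then show ?thesis
    using abs_ge_zero[of "f 0 - 1/2"] by linarith
qed

lemma potential_step:
  assumes w: "w \<in> space M"
  shows "potential (Suc n) w - potential n w - coef n w * (xi n w - f (alpha n w))
           \<ge> 1 / (4 * (l n w + 1)) - (2 * B + 1) * (alpha n w - 1/2)^2"
  using urn_potential_increment_ge[OF l_pos[OF w] xi_01, where a="alpha n w" and phi="f (alpha n w)" and B=B]
    slope alpha_range[OF w, of n]
  by (simp add: potential_def coef_def l_Suc[OF w] alpha_Suc[OF w])

lemma potential_minus_mart_ge:
  assumes w: "w \<in> bounded_set K L"
  shows "potential n w - mart K n w \<ge> drift L n - (2 * B + 1) * (\<Sum>k<n. (alpha k w - 1/2)^2)"
proof (induction n)
  case 0
  have "potential 0 w \<ge> 0"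
    using w l_0_pos[of w] by (simp add: potential_def bounded_set_def)
  then show ?case by (simp add: mart_def drift_def)
next
  case (Suc n)
  have wM: "w \<in> space M" and L: "l 0 w \<le> real L"
    using w by (auto simp: bounded_set_def)
  have "(\<Sum>j\<le>n. (alpha j w - 1/2)^2) \<le> K"
    using w unfolding bounded_set_def lessThan_Suc_atMost[symmetric] by blast
  then have "active K n w = 1"
    by (simp add: active_def)
  then have mart_Suc: "mart K (Suc n) w = mart K n w + coef n w * (xi n w - f (alpha n w))"
    by (simp add: mart_def)
  have "1 / (4 * (real L + 1 + real n)) \<le> 1 / (4 * (l n w + 1))"
    using l_eq[OF wM, of n] l_pos[OF wM, of n] L by (intro divide_left_mono) auto
  then show ?case
    using Suc.IH potential_step[OF wM, of n] by (simp add: mart_Suc drift_def algebra_simps)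
qed

lemma weighted_drift_le_on_bounded_set:
  assumes w: "w \<in> bounded_set K L"
  shows "(\<Sum>n<T. (drift L n - (2 * B + 1) * K - \<bar>mart K n w\<bar>) / (real L + 1 + real n)) \<le> K"
proof -
  have wM: "w \<in> space M" and sums: "\<And>n. (\<Sum>k<n. (alpha k w - 1/2)^2) \<le> K"
    using w by (auto simp: bounded_set_def)
  have "(drift L n - (2 * B + 1) * K - \<bar>mart K n w\<bar>) / (real L + 1 + real n) \<le> (alpha n w - 1/2)^2"
    for n
  proof -
    have "(2 * B + 1) * (\<Sum>k<n. (alpha k w - 1/2)^2) \<le> (2 * B + 1) * K"
      using sums slope_nonneg by (intro mult_left_mono) auto
    then have "drift L n - (2 * B + 1) * K - \<bar>mart K n w\<bar> \<le> potential n w"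
      using potential_minus_mart_ge[OF w, of n] by linarith
    also have "\<dots> \<le> (real L + 1 + real n) * (alpha n w - 1/2)^2"
      unfolding potential_def using l_eq[OF wM, of n] w
      by (intro mult_right_mono) (auto simp: bounded_set_def)
    finally show ?thesis
      by (simp add: pos_divide_le_eq mult.commute)
  qed
  then have "(\<Sum>n<T. (drift L n - (2 * B + 1) * K - \<bar>mart K n w\<bar>) / (real L + 1 + real n))
      \<le> (\<Sum>n<T. (alpha n w - 1/2)^2)"
    by (rule sum_mono)
  also have "\<dots> \<le> K" by (rule sums)
  finally show ?thesis .
qed

lemma measure_bounded_set_le:
  assumes "K \<ge> 0"
  shows "measure M (bounded_set K L) * ((\<Sum>n<T. (drift L n - (2 * B + 1) * K) / (real L + 1 + real n)) - K)
         \<le> (1 + 4 * K) / 2 * (\<Sum>n<T. 1 / (real L + 1 + real n))"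
proof -
  define R where "R = (\<Sum>n<T. (drift L n - (2 * B + 1) * K) / (real L + 1 + real n))"
  define Y where "Y w = (\<Sum>n<T. \<bar>mart K n w\<bar> / (real L + 1 + real n))" for w
  have int_Y: "integrable M (\<lambda>w. \<bar>mart K n w\<bar> / (real L + 1 + real n))" for n
  proof (rule integrable_bounded[where C="real n"])
    fix w assume "w \<in> space M"
    moreover have "\<bar>mart K n w\<bar> / (real L + 1 + real n) \<le> \<bar>mart K n w\<bar>"
      by (simp add: divide_le_eq mult_le_cancel_left1)
    ultimately show "\<bar>\<bar>mart K n w\<bar> / (real L + 1 + real n)\<bar> \<le> real n"
      using mart_abs_le[of w K n] by simp
  qed simp
  have "indicator (bounded_set K L) w * (R - K) \<le> Y w" for w
  proof (cases "w \<in> bounded_set K L")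
    case True
    have "(\<Sum>n<T. (drift L n - (2 * B + 1) * K - \<bar>mart K n w\<bar>) / (real L + 1 + real n)) = R - Y w"
      by (simp add: R_def Y_def sum_subtractf diff_divide_distrib)
    then show ?thesis
      using weighted_drift_le_on_bounded_set[OF True, of T] True by simp
  qed (simp add: Y_def sum_nonneg)
  moreover have "integrable M Y"
    unfolding Y_def by (rule Bochner_Integration.integrable_sum) (rule int_Y)
  moreover have "integrable M (\<lambda>w. indicator (bounded_set K L) w * (R - K))"
    by (intro integrable_bounded[where C="\<bar>R - K\<bar>"]) (auto simp: indicator_def)
  ultimately have "(\<integral>w. indicator (bounded_set K L) w * (R - K) \<partial>M) \<le> (\<integral>w. Y w \<partial>M)"
    by (intro integral_mono)
  also have "(\<integral>w. Y w \<partial>M) = (\<Sum>n<T. (\<integral>w. \<bar>mart K n w\<bar> \<partial>M) / (real L + 1 + real n))"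
    using int_Y by (simp add: Y_def Bochner_Integration.integral_sum)
  also have "\<dots> \<le> (\<Sum>n<T. (1 + 4 * K) / 2 / (real L + 1 + real n))"
    using integral_mart_abs_le[OF assms] by (intro sum_mono divide_right_mono) auto
  finally show ?thesis
    by (simp add: R_def sum_distrib_left)
qed

lemma measure_bounded_set_eq_0:
  assumes "K \<ge> 0"
  shows "measure M (bounded_set K L) = 0"
proof (rule ccontr)
  define p where "p = measure M (bounded_set K L)"
  define c where "c = (2 * B + 1) * K + (1 + 4 * K) / (2 * p)"
  assume "measure M (bounded_set K L) \<noteq> 0"
  then have p: "p > 0"
    by (simp add: p_def zero_less_measure_iff)
  have "filterlim (\<lambda>T. \<Sum>n<T. 1 / (real L + 1 + real n) * (drift L n - c)) at_top sequentially"
    by (intro filterlim_weighted_sum_at_top filterlim_sum_inverse_shift_at_top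
        filterlim_tendsto_add_at_top[OF tendsto_const drift_at_top, of "- c", simplified]) auto
  then obtain T where T: "(\<Sum>n<T. 1 / (real L + 1 + real n) * (drift L n - c)) > K"
    unfolding filterlim_at_top_dense eventually_sequentially by (meson gt_ex order.refl)
  define R J where "R = (\<Sum>n<T. (drift L n - (2 * B + 1) * K) / (real L + 1 + real n))"
    and "J = (\<Sum>n<T. 1 / (real L + 1 + real n))"
  have "(\<Sum>n<T. 1 / (real L + 1 + real n) * (drift L n - c)) = R - (1 + 4 * K) / (2 * p) * J"
    by (simp add: R_def J_def c_def sum_subtractf sum_distrib_left diff_divide_distrib add_divide_distrib sum.distrib)
  then have "p * (\<Sum>n<T. 1 / (real L + 1 + real n) * (drift L n - c)) = p * R - (1 + 4 * K) / 2 * J"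
    using p by (simp add: right_diff_distrib)
  also have "\<dots> \<le> p * K"
    using measure_bounded_set_le[OF assms, of L T] by (simp add: p_def R_def J_def right_diff_distrib)
  finally show False
    using T p by simp
qed

lemma AE_sum_sq_dev_at_top:
  "AE w in M. filterlim (\<lambda>n. \<Sum>k<n. (alpha k w - 1/2)^2) at_top sequentially"
proof -
  have "AE w in M. w \<notin> bounded_set (real K) L" for K L :: nat
    using measure_bounded_set_eq_0[of "real K" L]
    by (intro AE_not_in) (simp add: emeasure_eq_measure null_sets_def)
  then have "AE w in M. \<forall>K L :: nat. w \<notin> bounded_set (real K) L"
    by (simp add: AE_all_countable)
  then show ?thesis
  proof (rule AE_mp[OF _ AE_I2[OF impI]])
    fix w assume w: "w \<in> space M" and outside: "\<forall>K L :: nat. w \<notin> bounded_set (real K) L"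
    obtain L :: nat where "l 0 w \<le> real L"
      using real_arch_simple by blast
    then have "\<not> (\<forall>n. (\<Sum>k<n. (alpha k w - 1/2)^2) \<le> real K)" for K :: nat
      using outside w unfolding bounded_set_def by blast
    then have unbounded: "\<exists>n. real K < (\<Sum>k<n. (alpha k w - 1/2)^2)" for K :: nat
      by (simp add: not_le)
    show "filterlim (\<lambda>n. \<Sum>k<n. (alpha k w - 1/2)^2) at_top sequentially"
    proof (rule filterlim_incseq_at_top)
      show "incseq (\<lambda>n. \<Sum>k<n. (alpha k w - 1/2)^2)"
        by (rule incseq_SucI) simp
      show "\<exists>n. Z \<le> (\<Sum>k<n. (alpha k w - 1/2)^2)" for Z
        using unbounded[of "nat \<lceil>Z\<rceil>"] real_nat_ceiling_ge[of Z] by (meson order_trans less_imp_le)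
    qed
  qed
qed

lemma AE_sum_at_top_near_half:
  assumes "d > 0" and "\<eta> > 0" and lower: "\<And>y. \<bar>y - 1/2\<bar> < \<eta> \<Longrightarrow> d * (y - 1/2)^2 \<le> g y"
  shows "AE w in M. (\<lambda>n. alpha n w) \<longlonglongrightarrow> 1/2 \<longrightarrow>
           filterlim (\<lambda>n. \<Sum>k<n. g (alpha k w)) at_top sequentially"
  using AE_sum_sq_dev_at_top
proof eventually_elim
  case (elim w)
  show ?case
    using sum_at_top_of_quadratic_lower_bound[OF _ elim assms(1,2) lower] by blast
qed

end

end

lemma filterlim_urn_delta_iff:
  "filterlim (\<lambda>n. urn_delta f alpha n w) F sequentially
     \<longleftrightarrow> filterlim (\<lambda>n. \<Sum>k<n. 2 * f (alpha k w) - 1) F sequentially"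
  unfolding urn_delta_def lessThan_Suc_atMost[symmetric]
  by (rule filterlim_sequentially_Suc[of "\<lambda>n. \<Sum>k<n. 2 * f (alpha k w) - 1"])

theorem proposition4:
  fixes f f1 f2 f3 :: "real \<Rightarrow> real"
    and M :: "'w measure" and F :: "nat \<Rightarrow> 'w measure"
    and alpha l :: "nat \<Rightarrow> 'w \<Rightarrow> real"
  assumes range: "\<forall>x\<in>{0..1}. f x \<in> {0<..<1}"
    and d1: "\<forall>x\<in>{0..1}. (f has_real_derivative f1 x) (at x within {0..1})"
    and d2: "\<forall>x\<in>{0..1}. (f1 has_real_derivative f2 x) (at x within {0..1})"
    and d3: "\<forall>x\<in>{0..1}. (f2 has_real_derivative f3 x) (at x within {0..1})"
    and c3: "continuous_on {0..1} f3"
    and isolated: "\<forall>p\<in>{0..1}. f p = p \<longrightarrow>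
                     (\<exists>e>0. \<forall>x\<in>{0..1}. f x = x \<and> \<bar>x - p\<bar> < e \<longrightarrow> x = p)"
    and fix_half: "f (1/2) = 1/2"
    and stable: "f1 (1/2) \<le> 1"
    and deriv_zero: "f1 (1/2) = 0"
    and urn: "urn_process M F f alpha l"
  shows "(f2 (1/2) > 0 \<longrightarrow>
            (AE w in M. (\<lambda>n. alpha n w) \<longlonglongrightarrow> 1/2 \<longrightarrow>
                        filterlim (\<lambda>n. urn_delta f alpha n w) at_top sequentially))
       \<and> (f2 (1/2) < 0 \<longrightarrow>
            (AE w in M. (\<lambda>n. alpha n w) \<longlonglongrightarrow> 1/2 \<longrightarrow>
                        filterlim (\<lambda>n. urn_delta f alpha n w) at_bot sequentially))"
proof -
  interpret urn_model M F f alpha l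
    using urn range d1 by unfold_locales (auto intro!: DERIV_continuous_on)
  have "(f has_real_derivative f1 (1/2)) (at (1/2) within {0..1})"
    using d1 by simp
  moreover have "\<bar>f x - f (1/2)\<bar> \<le> 1" if "x \<in> {0..1}" for x
    using range that fix_half by fastforce
  ultimately obtain B where "\<And>x. x \<in> {0..1} \<Longrightarrow> \<bar>f x - f (1/2)\<bar> \<le> B * \<bar>x - 1/2\<bar>"
    using bounded_slope_at by blast
  then have slope: "\<forall>a\<in>{0..1}. \<bar>f a - 1/2\<bar> \<le> B * \<bar>a - 1/2\<bar>"
    using fix_half by simp
  define c where "c = f2 (1/2)"
  have "AE w in M. (\<lambda>n. alpha n w) \<longlonglongrightarrow> 1/2 \<longrightarrow>
      filterlim (\<lambda>n. sgn c * (\<Sum>k<n. 2 * f (alpha k w) - 1)) at_top sequentially" if "c \<noteq> 0"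
  proof -
    have half: "(1/2::real) \<in> {0<..<1}"
      by simp
    have "\<exists>\<eta>>0. \<forall>x. \<bar>x - 1/2\<bar> < \<eta> \<longrightarrow> \<bar>c\<bar> / 4 * (x - 1/2)^2 \<le> sgn c * (f x - f (1/2))"
      using has_real_derivative_interior_Icc[OF d1] has_real_derivative_interior_Icc[OF d2] half
        DERIV_isCont[OF has_real_derivative_interior_Icc[OF d3 half]] deriv_zero that
      unfolding c_def by (rule quadratic_growth_at_critical_point)
    then obtain \<eta> where "\<eta> > 0"
      and "\<And>y. \<bar>y - 1/2\<bar> < \<eta> \<Longrightarrow> \<bar>c\<bar> / 2 * (y - 1/2)^2 \<le> sgn c * (2 * f y - 1)"
      by (fastforce simp: fix_half algebra_simps)
    from AE_sum_at_top_near_half[OF slope _ this] that show ?thesis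
      by (simp add: sum_distrib_left)
  qed
  then show ?thesis
    by (auto simp: c_def filterlim_urn_delta_iff filterlim_uminus_at_top)
qed

end
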